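(* Let $A$ be a finite-dimensional associative algebra over $K=\mathbb{R}$ or $\mathbb{C}$ with unit $u$, and let $\{\cdot,\cdot\}$ be a quadratic Poisson bracket on $A$ compatible with its multiplication, with dual map $\delta\colon\mathrm{Symm}(A\otimes A)\to A\wedge A$. Then the map $\Delta\colon A\to A\wedge A$, $\Delta(x)=\delta(x\otimes u+u\otimes x)$, is a cocommutator making the Lie algebra $A_L$ into a Lie bialgebra.
   Context: $A_L$ denotes the Lie algebra on the vector space $A$ with bracket $[a,b]=ab-ba$. A quadratic Poisson bracket on $A$ is a Poisson bracket on $C^\infty(A)$ such that the bracket of two linear functions is a homogeneous quadratic function; it is encoded by $\delta^*\colon A^*\wedge A^*\to\mathrm{Sym}^2(A^* )$, $\delta^*(\xi\wedge\eta)=\{\xi,\eta\}$, and $\delta$ is its dual map (identifying $\mathrm{Symm}(A\otimes A)$, the symmetric tensors, with $(\mathrm{Sym}^2A^* )^*$ and $A\wedge A$, the skew-symmetric tensors in $A\otimes A$, with $(A^*\wedge A^* )^*$). Compatibility with the multiplication means that the multiplication map $A\times A\to A$ is a Poisson map when $A\times A$ carries the product Poisson structure. A Lie bialgebra structure on a Lie algebra $L$ is a linear map $\Delta\colon L\to L\wedge L$ which is a 1-cocycle with respect to the adjoint action and whose dual $\Delta^*\colon L^*\wedge L^*\to L^*$ is a Lie bracket. *)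

theory Defs
  imports Complex_Main
begin

text \<open>A finite-dimensional algebra A over K is represented as K^n,
  i.e. vectors \<open>'n \<Rightarrow> 'k\<close> for a finite index type \<open>'n\<close> (a basis e_1..e_n).
  Tensors in A \<otimes> A are \<open>'n \<Rightarrow> 'n \<Rightarrow> 'k\<close> (coefficients w.r.t. e_i \<otimes> e_j).
  Dual vectors (elements of A^*) are likewise \<open>'n \<Rightarrow> 'k\<close> (coefficients w.r.t. the
  dual basis x_1..x_n, i.e. the linear coordinate functions).\<close>

definition bvec :: "'n \<Rightarrow> 'n \<Rightarrow> 'k::comm_ring_1" where
  "bvec a = (\<lambda>i. if i = a then 1 else 0)"

definition amul :: "('n::finite \<Rightarrow> 'n \<Rightarrow> 'n \<Rightarrow> 'k::comm_ring_1) \<Rightarrow> ('n \<Rightarrow> 'k) \<Rightarrow> ('n \<Rightarrow> 'k) \<Rightarrow> ('n \<Rightarrow> 'k)" where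
  "amul c x y = (\<lambda>k. \<Sum>i\<in>UNIV. \<Sum>j\<in>UNIV. x i * y j * c i j k)"

definition unital_assoc_algebra :: "('n::finite \<Rightarrow> 'n \<Rightarrow> 'n \<Rightarrow> 'k::comm_ring_1) \<Rightarrow> ('n \<Rightarrow> 'k) \<Rightarrow> bool" where
  "unital_assoc_algebra c u \<longleftrightarrow>
     (\<forall>x y z. amul c (amul c x y) z = amul c x (amul c y z)) \<and>
     (\<forall>x. amul c u x = x \<and> amul c x u = x)"

definition commutator :: "('n::finite \<Rightarrow> 'n \<Rightarrow> 'n \<Rightarrow> 'k::comm_ring_1) \<Rightarrow> ('n \<Rightarrow> 'k) \<Rightarrow> ('n \<Rightarrow> 'k) \<Rightarrow> ('n \<Rightarrow> 'k)" where
  "commutator c x y = (\<lambda>k. amul c x y k - amul c y x k)"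

text \<open>A quadratic bracket is given by P: {x_i, x_j} = sum_{k,l} P i j k l x_k x_l,
  with P i j a symmetric tensor (an element of Sym^2(A^*)), i.e. P symmetric in k,l.
  \<open>qpi P a i j\<close> is the value of {x_i,x_j} at the point a (the Poisson bivector at a),
  \<open>dqpi P a i j m\<close> its partial derivative along x_m at a.\<close>
definition qpi :: "('n::finite \<Rightarrow> 'n \<Rightarrow> 'n \<Rightarrow> 'n \<Rightarrow> 'k::comm_ring_1) \<Rightarrow> ('n \<Rightarrow> 'k) \<Rightarrow> 'n \<Rightarrow> 'n \<Rightarrow> 'k" where
  "qpi P a i j = (\<Sum>k\<in>UNIV. \<Sum>l\<in>UNIV. P i j k l * a k * a l)"

definition dqpi :: "('n::finite \<Rightarrow> 'n \<Rightarrow> 'n \<Rightarrow> 'n \<Rightarrow> 'k::comm_ring_1) \<Rightarrow> ('n \<Rightarrow> 'k) \<Rightarrow> 'n \<Rightarrow> 'n \<Rightarrow> 'n \<Rightarrow> 'k" where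
  "dqpi P a i j m = (\<Sum>l\<in>UNIV. (P i j m l + P i j l m) * a l)"

text \<open>A Poisson bracket on smooth functions is determined by its bivector
  pi_{ij} = {x_i,x_j}, and the Jacobi identity holds for all functions iff
  sum_m (pi_{im} d_m pi_{jk} + cyclic) = 0 identically.\<close>
definition quadratic_poisson :: "('n::finite \<Rightarrow> 'n \<Rightarrow> 'n \<Rightarrow> 'n \<Rightarrow> 'k::comm_ring_1) \<Rightarrow> bool" where
  "quadratic_poisson P \<longleftrightarrow>
     (\<forall>i j k l. P i j k l = P i j l k) \<and>
     (\<forall>i j k l. P i j k l = - P j i k l) \<and>
     (\<forall>a i j k. (\<Sum>m\<in>UNIV. qpi P a i m * dqpi P a j k m
                         + qpi P a j m * dqpi P a k i m
                         + qpi P a k m * dqpi P a i j m) = 0)"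

text \<open>Compatibility: multiplication A \<times> A \<rightarrow> A is a Poisson map (product structure on A \<times> A).
  Pulling back x_k, x_l along m and using d_{a_i}(ab) = e_i b, d_{b_j}(ab) = a e_j.\<close>
definition poisson_compatible :: "('n::finite \<Rightarrow> 'n \<Rightarrow> 'n \<Rightarrow> 'k::comm_ring_1) \<Rightarrow> ('n \<Rightarrow> 'n \<Rightarrow> 'n \<Rightarrow> 'n \<Rightarrow> 'k) \<Rightarrow> bool" where
  "poisson_compatible c P \<longleftrightarrow>
     (\<forall>a b k l. qpi P (amul c a b) k l =
        (\<Sum>i\<in>UNIV. \<Sum>j\<in>UNIV. qpi P a i j * amul c (bvec i) b k * amul c (bvec j) b l)
      + (\<Sum>i\<in>UNIV. \<Sum>j\<in>UNIV. qpi P b i j * amul c a (bvec i) k * amul c a (bvec j) l))"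

text \<open>The dual map delta : Symm(A \<otimes> A) \<rightarrow> A \<wedge> A of delta^*(x_i \<wedge> x_j) = {x_i,x_j},
  (pairings by full contraction of coefficients).\<close>
definition pdelta :: "('n::finite \<Rightarrow> 'n \<Rightarrow> 'n \<Rightarrow> 'n \<Rightarrow> 'k::comm_ring_1) \<Rightarrow> ('n \<Rightarrow> 'n \<Rightarrow> 'k) \<Rightarrow> ('n \<Rightarrow> 'n \<Rightarrow> 'k)" where
  "pdelta P T = (\<lambda>i j. \<Sum>k\<in>UNIV. \<Sum>l\<in>UNIV. P i j k l * T k l)"

definition cocomm :: "('n::finite \<Rightarrow> 'n \<Rightarrow> 'n \<Rightarrow> 'n \<Rightarrow> 'k::comm_ring_1) \<Rightarrow> ('n \<Rightarrow> 'k) \<Rightarrow> ('n \<Rightarrow> 'k) \<Rightarrow> ('n \<Rightarrow> 'n \<Rightarrow> 'k)" where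
  "cocomm P u x = pdelta P (\<lambda>k l. x k * u l + u k * x l)"

definition lie_bracket :: "(('n::finite \<Rightarrow> 'k::comm_ring_1) \<Rightarrow> ('n \<Rightarrow> 'k) \<Rightarrow> ('n \<Rightarrow> 'k)) \<Rightarrow> bool" where
  "lie_bracket B \<longleftrightarrow>
     (\<forall>x y z. B (\<lambda>i. x i + y i) z = (\<lambda>i. B x z i + B y z i)) \<and>
     (\<forall>x y z. B z (\<lambda>i. x i + y i) = (\<lambda>i. B z x i + B z y i)) \<and>
     (\<forall>s x y. B (\<lambda>i. s * x i) y = (\<lambda>i. s * B x y i)) \<and>
     (\<forall>s x y. B y (\<lambda>i. s * x i) = (\<lambda>i. s * B y x i)) \<and>
     (\<forall>x. B x x = (\<lambda>i. 0)) \<and>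
     (\<forall>x y z. (\<lambda>i. B x (B y z) i + B y (B z x) i + B z (B x y) i) = (\<lambda>i. 0))"

text \<open>Adjoint action of x on A \<otimes> A: x.(a \<otimes> b) = [x,a] \<otimes> b + a \<otimes> [x,b].\<close>
definition ad2 :: "(('n::finite \<Rightarrow> 'k::comm_ring_1) \<Rightarrow> ('n \<Rightarrow> 'k) \<Rightarrow> ('n \<Rightarrow> 'k)) \<Rightarrow> ('n \<Rightarrow> 'k) \<Rightarrow> ('n \<Rightarrow> 'n \<Rightarrow> 'k) \<Rightarrow> ('n \<Rightarrow> 'n \<Rightarrow> 'k)" where
  "ad2 B x T = (\<lambda>i j. (\<Sum>a\<in>UNIV. T a j * B x (bvec a) i) + (\<Sum>b\<in>UNIV. T i b * B x (bvec b) j))"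

text \<open>Dual map Delta^* : A^* \<wedge> A^* \<rightarrow> A^*, <Delta^*(xi,eta), x> = <xi \<otimes> eta, Delta x>.\<close>
definition dual_bracket :: "(('n::finite \<Rightarrow> 'k::comm_ring_1) \<Rightarrow> ('n \<Rightarrow> 'n \<Rightarrow> 'k)) \<Rightarrow> ('n \<Rightarrow> 'k) \<Rightarrow> ('n \<Rightarrow> 'k) \<Rightarrow> ('n \<Rightarrow> 'k)" where
  "dual_bracket D xi eta = (\<lambda>k. \<Sum>i\<in>UNIV. \<Sum>j\<in>UNIV. xi i * eta j * D (bvec k) i j)"

definition lie_bialgebra :: "(('n::finite \<Rightarrow> 'k::comm_ring_1) \<Rightarrow> ('n \<Rightarrow> 'k) \<Rightarrow> ('n \<Rightarrow> 'k)) \<Rightarrow> (('n \<Rightarrow> 'k) \<Rightarrow> ('n \<Rightarrow> 'n \<Rightarrow> 'k)) \<Rightarrow> bool" where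
  "lie_bialgebra B D \<longleftrightarrow>
     lie_bracket B \<and>
     (\<forall>x y. D (\<lambda>i. x i + y i) = (\<lambda>i j. D x i j + D y i j)) \<and>
     (\<forall>s x. D (\<lambda>i. s * x i) = (\<lambda>i j. s * D x i j)) \<and>
     (\<forall>x i j. D x i j = - D x j i) \<and>
     (\<forall>x y. D (B x y) = (\<lambda>i j. ad2 B x (D y) i j - ad2 B y (D x) i j)) \<and>
     lie_bracket (dual_bracket D)"

end

theory Submission
  imports Defs "HOL-Library.Function_Algebras"
begin

(* Write \<pi>(a) = qpi P a for the Poisson bivector at a \<in> A. Compatibility says
   \<pi>(ab) = (r_b \<otimes> r_b) \<pi>(a) + (l_a \<otimes> l_a) \<pi>(b); at a = b = u it gives \<pi>(u) = 0, and \<Delta>(x) is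
   the derivative of \<pi> at u in the direction x. Hence \<Delta>\<^sup>* is the linearisation of the
   Poisson bracket at its zero u, and the Jacobi identity for \<Delta>\<^sup>* is the first-order part of
   the Jacobi identity for \<pi> at u + t v. Differentiating compatibility at (u, u) in the
   directions (x, y) gives
     \<Delta>(xy) + S(x, y) = (r_y \<otimes> 1 + 1 \<otimes> r_y) \<Delta>(x) + (l_x \<otimes> 1 + 1 \<otimes> l_x) \<Delta>(y)
   with S symmetric in x and y; antisymmetrising in x, y yields the cocycle condition.
   Derivatives are replaced by finite differences of polynomials, so the field must have
   characteristic 0. *)

definition qpi_bilin :: "('n::finite \<Rightarrow> 'n \<Rightarrow> 'n \<Rightarrow> 'n \<Rightarrow> 'k::comm_ring_1) \<Rightarrow> ('n \<Rightarrow> 'k) \<Rightarrow> ('n \<Rightarrow> 'k)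
    \<Rightarrow> ('n \<Rightarrow> 'n \<Rightarrow> 'k)" where
  "qpi_bilin P x y = (\<lambda>i j. \<Sum>k\<in>UNIV. \<Sum>l\<in>UNIV. P i j k l * x k * y l)"

definition rmul_tensor :: "('n::finite \<Rightarrow> 'n \<Rightarrow> 'n \<Rightarrow> 'k::comm_ring_1) \<Rightarrow> ('n \<Rightarrow> 'k) \<Rightarrow> ('n \<Rightarrow> 'k)
    \<Rightarrow> ('n \<Rightarrow> 'n \<Rightarrow> 'k) \<Rightarrow> ('n \<Rightarrow> 'n \<Rightarrow> 'k)" where
  "rmul_tensor c b b' T =
     (\<lambda>k l. \<Sum>i\<in>UNIV. \<Sum>j\<in>UNIV. T i j * amul c (bvec i) b k * amul c (bvec j) b' l)"

definition lmul_tensor :: "('n::finite \<Rightarrow> 'n \<Rightarrow> 'n \<Rightarrow> 'k::comm_ring_1) \<Rightarrow> ('n \<Rightarrow> 'k) \<Rightarrow> ('n \<Rightarrow> 'k)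
    \<Rightarrow> ('n \<Rightarrow> 'n \<Rightarrow> 'k) \<Rightarrow> ('n \<Rightarrow> 'n \<Rightarrow> 'k)" where
  "lmul_tensor c a a' T =
     (\<lambda>k l. \<Sum>i\<in>UNIV. \<Sum>j\<in>UNIV. T i j * amul c a (bvec i) k * amul c a' (bvec j) l)"

lemma sum_bvec_mult:
  fixes f :: "'n::finite \<Rightarrow> 'k::comm_ring_1"
  shows "(\<Sum>i\<in>UNIV. f i * bvec i k) = f k"
    and "(\<Sum>i\<in>UNIV. f i * bvec k i) = f k"
    and "(\<Sum>i\<in>UNIV. bvec i k * f i) = f k"
    and "(\<Sum>i\<in>UNIV. bvec k i * f i) = f k"
  by (simp_all add: bvec_def if_distrib[where f="\<lambda>x. f _ * x"] if_distrib[where f="\<lambda>x. x * f _"]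
      cong: if_cong)

lemma sum_sum_bvec_left:
  fixes T :: "'n::finite \<Rightarrow> 'n \<Rightarrow> 'k::comm_ring_1"
  shows "(\<Sum>a\<in>UNIV. \<Sum>b\<in>UNIV. T a b * bvec a i * g b) = (\<Sum>b\<in>UNIV. T i b * g b)"
proof -
  have "(\<Sum>a\<in>UNIV. \<Sum>b\<in>UNIV. T a b * bvec a i * g b)
      = (\<Sum>b\<in>UNIV. \<Sum>a\<in>UNIV. (T a b * g b) * bvec a i)"
    by (subst sum.swap) (simp add: mult_ac)
  then show ?thesis by (simp only: sum_bvec_mult)
qed

lemma sum_rotate3:
  "(\<Sum>a\<in>UNIV. \<Sum>b\<in>UNIV. \<Sum>c\<in>UNIV. f a b c) = (\<Sum>c\<in>UNIV. \<Sum>a\<in>UNIV. \<Sum>b\<in>UNIV. f a b c)"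
  by (subst sum.swap) (rule sum.cong[OF refl], rule sum.swap)

lemma amul_add:
  "amul c (x + y) z = amul c x z + amul c y z"
  "amul c z (x + y) = amul c z x + amul c z y"
  by (simp_all add: amul_def fun_eq_iff algebra_simps sum.distrib)

lemma amul_diff:
  "amul c (x - y) z = amul c x z - amul c y z"
  "amul c z (x - y) = amul c z x - amul c z y"
  by (simp_all add: amul_def fun_eq_iff algebra_simps sum_subtractf)

lemma qpi_bilin_add:
  "qpi_bilin P (x + y) z = qpi_bilin P x z + qpi_bilin P y z"
  "qpi_bilin P z (x + y) = qpi_bilin P z x + qpi_bilin P z y"
  by (simp_all add: qpi_bilin_def fun_eq_iff algebra_simps sum.distrib)

lemma qpi_bilin_diff:
  "qpi_bilin P (x - y) z = qpi_bilin P x z - qpi_bilin P y z"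
  "qpi_bilin P z (x - y) = qpi_bilin P z x - qpi_bilin P z y"
  by (simp_all add: qpi_bilin_def fun_eq_iff algebra_simps sum_subtractf)

lemma rmul_tensor_add:
  "rmul_tensor c b b' (S + T) = rmul_tensor c b b' S + rmul_tensor c b b' T"
  "rmul_tensor c (x + y) b' T = rmul_tensor c x b' T + rmul_tensor c y b' T"
  "rmul_tensor c b (x + y) T = rmul_tensor c b x T + rmul_tensor c b y T"
  by (simp_all add: rmul_tensor_def amul_add fun_eq_iff algebra_simps sum.distrib)

lemma rmul_tensor_diff:
  "rmul_tensor c b b' (S - T) = rmul_tensor c b b' S - rmul_tensor c b b' T"
  "rmul_tensor c (x - y) b' T = rmul_tensor c x b' T - rmul_tensor c y b' T"
  "rmul_tensor c b (x - y) T = rmul_tensor c b x T - rmul_tensor c b y T"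
  by (simp_all add: rmul_tensor_def amul_diff fun_eq_iff algebra_simps sum_subtractf)

lemma lmul_tensor_add:
  "lmul_tensor c a a' (S + T) = lmul_tensor c a a' S + lmul_tensor c a a' T"
  "lmul_tensor c (x + y) a' T = lmul_tensor c x a' T + lmul_tensor c y a' T"
  "lmul_tensor c a (x + y) T = lmul_tensor c a x T + lmul_tensor c a y T"
  by (simp_all add: lmul_tensor_def amul_add fun_eq_iff algebra_simps sum.distrib)

lemma lmul_tensor_diff:
  "lmul_tensor c a a' (S - T) = lmul_tensor c a a' S - lmul_tensor c a a' T"
  "lmul_tensor c (x - y) a' T = lmul_tensor c x a' T - lmul_tensor c y a' T"
  "lmul_tensor c a (x - y) T = lmul_tensor c a x T - lmul_tensor c a y T"
  by (simp_all add: lmul_tensor_def amul_diff fun_eq_iff algebra_simps sum_subtractf)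

lemmas multilinear_expand = amul_add amul_diff qpi_bilin_add qpi_bilin_diff
  rmul_tensor_add rmul_tensor_diff lmul_tensor_add lmul_tensor_diff

lemma dqpi_add: "dqpi P (a + b) i j m = dqpi P a i j m + dqpi P b i j m"
  by (simp add: dqpi_def algebra_simps sum.distrib)

lemma dqpi_diff: "dqpi P (a - b) i j m = dqpi P a i j m - dqpi P b i j m"
  by (simp add: dqpi_def algebra_simps sum_subtractf)

lemma cocomm_diff: "cocomm P u (x - y) = cocomm P u x - cocomm P u y"
  by (simp add: cocomm_def pdelta_def fun_eq_iff algebra_simps sum_subtractf)

lemma qpi_bilin_bvec:
  "qpi_bilin P (bvec m) y i j = (\<Sum>l\<in>UNIV. P i j m l * y l)"
  "qpi_bilin P y (bvec m) i j = (\<Sum>k\<in>UNIV. P i j k m * y k)"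
proof -
  have "qpi_bilin P (bvec m) y i j = (\<Sum>k\<in>UNIV. bvec m k * (\<Sum>l\<in>UNIV. P i j k l * y l))"
    by (simp add: qpi_bilin_def sum_distrib_left mult_ac)
  then show "qpi_bilin P (bvec m) y i j = (\<Sum>l\<in>UNIV. P i j m l * y l)"
    by (simp only: sum_bvec_mult)
  have "qpi_bilin P y (bvec m) i j = (\<Sum>k\<in>UNIV. \<Sum>l\<in>UNIV. (P i j k l * y k) * bvec m l)"
    by (simp add: qpi_bilin_def)
  then show "qpi_bilin P y (bvec m) i j = (\<Sum>k\<in>UNIV. P i j k m * y k)"
    by (simp only: sum_bvec_mult)
qed

lemma qpi_eq_qpi_bilin: "qpi P a = qpi_bilin P a a"
  by (simp add: qpi_def qpi_bilin_def fun_eq_iff)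

lemma cocomm_eq_qpi_bilin: "cocomm P u x = qpi_bilin P x u + qpi_bilin P u x"
  by (simp add: cocomm_def pdelta_def qpi_bilin_def fun_eq_iff algebra_simps sum.distrib)

lemma dqpi_eq_qpi_bilin: "dqpi P a i j m = qpi_bilin P (bvec m) a i j + qpi_bilin P a (bvec m) i j"
  by (simp add: dqpi_def qpi_bilin_bvec algebra_simps sum.distrib)

lemma cocomm_bvec: "cocomm P u (bvec m) i j = dqpi P u i j m"
  by (simp add: cocomm_eq_qpi_bilin dqpi_eq_qpi_bilin add.commute)

lemma cocomm_skew:
  assumes "quadratic_poisson P"
  shows "cocomm P u x i j = - cocomm P u x j i"
proof -
  have "P i j k l = - P j i k l" for k l
    using assms unfolding quadratic_poisson_def by blast
  then show ?thesis
    by (simp add: cocomm_def pdelta_def flip: sum_negf)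
qed

lemma
  assumes "unital_assoc_algebra c u"
  shows amul_unit_left: "amul c u x = x"
    and amul_unit_right: "amul c x u = x"
    and amul_assoc: "amul c (amul c x y) z = amul c x (amul c y z)"
  using assms unfolding unital_assoc_algebra_def by blast+

lemma
  assumes "unital_assoc_algebra c u"
  shows rmul_tensor_unit: "rmul_tensor c u u T = T"
    and lmul_tensor_unit: "lmul_tensor c u u T = T"
  by (simp_all add: rmul_tensor_def lmul_tensor_def amul_unit_left[OF assms]
      amul_unit_right[OF assms] sum_bvec_mult fun_eq_iff)

lemma poisson_compatible_iff:
  "poisson_compatible c P \<longleftrightarrow>
     (\<forall>a b. qpi P (amul c a b) = rmul_tensor c b b (qpi P a) + lmul_tensor c a a (qpi P b))"
  by (simp add: poisson_compatible_def rmul_tensor_def lmul_tensor_def fun_eq_iff)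

lemma qpi_unit_eq_0:
  assumes U: "unital_assoc_algebra c u" and C: "poisson_compatible c P"
  shows "qpi P u = 0"
proof -
  have "qpi P u = qpi P u + qpi P u"
    using C[unfolded poisson_compatible_iff, rule_format, of u u]
    by (simp add: amul_unit_left[OF U] rmul_tensor_unit[OF U] lmul_tensor_unit[OF U])
  then show ?thesis by simp
qed

lemma infinitesimal_compatibility:
  fixes P :: "'n::finite \<Rightarrow> 'n \<Rightarrow> 'n \<Rightarrow> 'n \<Rightarrow> 'k::field_char_0"
  assumes U: "unital_assoc_algebra c u" and C: "poisson_compatible c P"
  shows "cocomm P u (amul c x y) + (qpi_bilin P x y + qpi_bilin P y x)
     = rmul_tensor c u y (cocomm P u x) + rmul_tensor c y u (cocomm P u x)
     + lmul_tensor c u x (cocomm P u y) + lmul_tensor c x u (cocomm P u y)"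
    (is "?L = ?R")
proof -
  define E where
    "E a b = qpi P (amul c a b) - (rmul_tensor c b b (qpi P a) + lmul_tensor c a a (qpi P b))"
    for a b
  have "E a b = 0" for a b
    using C by (simp add: poisson_compatible_iff E_def)
  \<comment> \<open>four times the coefficient of s t in E (u + s x) (u + t y), as \<pi>(u) = 0\<close>
  moreover have "E (u + x) (u + y) - E (u + x) (u - y) - E (u - x) (u + y) + E (u - x) (u - y)
      = 4 * (?L - ?R)"
    using qpi_unit_eq_0[OF U C]
    by (simp add: E_def qpi_eq_qpi_bilin cocomm_eq_qpi_bilin multilinear_expand
        amul_unit_left[OF U] amul_unit_right[OF U] rmul_tensor_unit[OF U] lmul_tensor_unit[OF U]
        algebra_simps)
  ultimately have "4 * (?L - ?R) = 0" by simp
  moreover have "4 * D = 0 \<Longrightarrow> D = 0" for D :: "'n \<Rightarrow> 'n \<Rightarrow> 'k"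
    by (simp add: fun_eq_iff)
  ultimately have "?L - ?R = 0" by blast
  then show ?thesis by simp
qed

lemma commutator_eq: "commutator c x y = amul c x y - amul c y x"
  by (simp add: commutator_def fun_eq_iff)

lemma ad2_commutator_eq:
  assumes U: "unital_assoc_algebra c u"
  shows "ad2 (commutator c) x T
    = lmul_tensor c x u T + lmul_tensor c u x T - rmul_tensor c x u T - rmul_tensor c u x T"
proof -
  have "lmul_tensor c x u T i j = (\<Sum>a\<in>UNIV. T a j * amul c x (bvec a) i)"
    and "lmul_tensor c u x T i j = (\<Sum>b\<in>UNIV. T i b * amul c x (bvec b) j)"
    and "rmul_tensor c x u T i j = (\<Sum>a\<in>UNIV. T a j * amul c (bvec a) x i)"
    and "rmul_tensor c u x T i j = (\<Sum>b\<in>UNIV. T i b * amul c (bvec b) x j)" for i j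
    by (simp_all add: lmul_tensor_def rmul_tensor_def amul_unit_left[OF U] amul_unit_right[OF U]
        sum_bvec_mult sum_sum_bvec_left)
  then show ?thesis
    by (simp add: fun_eq_iff ad2_def commutator_def algebra_simps sum_subtractf)
qed

lemma cocomm_commutator:
  fixes P :: "'n::finite \<Rightarrow> 'n \<Rightarrow> 'n \<Rightarrow> 'n \<Rightarrow> 'k::field_char_0"
  assumes U: "unital_assoc_algebra c u" and C: "poisson_compatible c P"
  shows "cocomm P u (commutator c x y)
    = ad2 (commutator c) x (cocomm P u y) - ad2 (commutator c) y (cocomm P u x)"
proof -
  have "cocomm P u (commutator c x y)
      = (cocomm P u (amul c x y) + (qpi_bilin P x y + qpi_bilin P y x))
      - (cocomm P u (amul c y x) + (qpi_bilin P y x + qpi_bilin P x y))"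
    by (simp add: commutator_eq cocomm_diff algebra_simps)
  also have "\<dots> = (rmul_tensor c u y (cocomm P u x) + rmul_tensor c y u (cocomm P u x)
        + lmul_tensor c u x (cocomm P u y) + lmul_tensor c x u (cocomm P u y))
      - (rmul_tensor c u x (cocomm P u y) + rmul_tensor c x u (cocomm P u y)
        + lmul_tensor c u y (cocomm P u x) + lmul_tensor c y u (cocomm P u x))"
    by (simp only: infinitesimal_compatibility[OF U C])
  also have "\<dots> = ad2 (commutator c) x (cocomm P u y) - ad2 (commutator c) y (cocomm P u x)"
    by (simp add: ad2_commutator_eq[OF U] algebra_simps)
  finally show ?thesis .
qed

lemma jacobi_linearization:
  fixes P :: "'n::finite \<Rightarrow> 'n \<Rightarrow> 'n \<Rightarrow> 'n \<Rightarrow> 'k::field_char_0"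
  assumes Q: "quadratic_poisson P" and Z: "qpi P u = 0"
  shows "(\<Sum>m\<in>UNIV. dqpi P u i m r * dqpi P u j k m + dqpi P u j m r * dqpi P u k i m
                     + dqpi P u k m r * dqpi P u i j m) = 0"
proof -
  define v :: "'n \<Rightarrow> 'k" where "v = bvec r"
  define K where "K i j = dqpi P u i j r" for i j
  define f where "f a m = qpi P a i m * dqpi P a j k m + qpi P a j m * dqpi P a k i m
      + qpi P a k m * dqpi P a i j m" for a m
  have jacobi: "(\<Sum>m\<in>UNIV. f a m) = 0" for a
    using Q unfolding quadratic_poisson_def f_def by blast
  have K_eq: "K = qpi_bilin P u v + qpi_bilin P v u"
    by (simp add: K_def v_def dqpi_eq_qpi_bilin fun_eq_iff)
  define g where "g m = K i m * dqpi P u j k m + K j m * dqpi P u k i m + K k m * dqpi P u i j m"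
    for m
  have qpi_plus: "qpi P (u + v) = K + qpi P v" and qpi_minus: "qpi P (u - v) = qpi P v - K"
    using Z by (simp_all add: K_eq qpi_eq_qpi_bilin multilinear_expand algebra_simps)
  \<comment> \<open>f (u + t v) m is a cubic in t whose linear coefficient is g m\<close>
  have "2 * g m = f (u + v) m - f (u - v) m - 2 * f v m" for m
    by (simp add: f_def g_def qpi_plus qpi_minus dqpi_add dqpi_diff algebra_simps)
  then have "2 * (\<Sum>m\<in>UNIV. g m)
      = (\<Sum>m\<in>UNIV. f (u + v) m) - (\<Sum>m\<in>UNIV. f (u - v) m) - 2 * (\<Sum>m\<in>UNIV. f v m)"
    by (simp add: sum_distrib_left sum_subtractf)
  then have "(\<Sum>m\<in>UNIV. g m) = 0"
    by (simp add: jacobi)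
  then show ?thesis by (simp add: g_def K_def)
qed

lemma lie_bracket_bilinearI:
  fixes B :: "('n::finite \<Rightarrow> 'k::comm_ring_1) \<Rightarrow> ('n \<Rightarrow> 'k) \<Rightarrow> ('n \<Rightarrow> 'k)"
  assumes bilinear: "\<And>x y. B x y = (\<lambda>k. \<Sum>i\<in>UNIV. \<Sum>j\<in>UNIV. x i * y j * C i j k)"
    and alternating: "\<And>x. B x x = (\<lambda>k. 0)"
    and jacobi: "\<And>x y z. (\<lambda>k. B x (B y z) k + B y (B z x) k + B z (B x y) k) = (\<lambda>k. 0)"
  shows "lie_bracket B"
proof -
  have "B (\<lambda>i. x i + y i) z = (\<lambda>k. B x z k + B y z k)"
    and "B z (\<lambda>i. x i + y i) = (\<lambda>k. B z x k + B z y k)"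
    and "B (\<lambda>i. s * x i) y = (\<lambda>k. s * B x y k)"
    and "B y (\<lambda>i. s * x i) = (\<lambda>k. s * B y x k)" for x y z s
    by (simp_all only: bilinear) (simp_all add: algebra_simps sum.distrib sum_distrib_left)
  then show ?thesis
    unfolding lie_bracket_def using alternating jacobi by blast
qed

lemma lie_bracket_commutator:
  fixes c :: "'n::finite \<Rightarrow> 'n \<Rightarrow> 'n \<Rightarrow> 'k::comm_ring_1"
  assumes assoc: "\<And>x y z. amul c (amul c x y) z = amul c x (amul c y z)"
  shows "lie_bracket (commutator c)"
proof (rule lie_bracket_bilinearI)
  fix x y z :: "'n \<Rightarrow> 'k"
  have "amul c y x k = (\<Sum>i\<in>UNIV. \<Sum>j\<in>UNIV. x i * y j * c j i k)" for k
    unfolding amul_def by (subst sum.swap) (simp add: mult_ac)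
  then show "commutator c x y = (\<lambda>k. \<Sum>i\<in>UNIV. \<Sum>j\<in>UNIV. x i * y j * (c i j k - c j i k))"
    by (simp add: commutator_def amul_def algebra_simps sum_subtractf)
  show "commutator c x x = (\<lambda>k. 0)"
    by (simp add: commutator_def)
  have "commutator c x (commutator c y z) + commutator c y (commutator c z x)
      + commutator c z (commutator c x y) = 0"
    by (simp add: commutator_eq amul_diff assoc algebra_simps)
  then show "(\<lambda>k. commutator c x (commutator c y z) k + commutator c y (commutator c z x) k
      + commutator c z (commutator c x y) k) = (\<lambda>k. 0)"
    by (simp add: fun_eq_iff)
qed

lemma dual_bracket_dual_bracket:
  "dual_bracket D x (dual_bracket D y z) r
    = (\<Sum>i\<in>UNIV. \<Sum>j\<in>UNIV. \<Sum>k\<in>UNIV.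
         x i * y j * z k * (\<Sum>m\<in>UNIV. D (bvec r) i m * D (bvec m) j k))"
proof (unfold dual_bracket_def, rule sum.cong[OF refl])
  fix i
  have "(\<Sum>m\<in>UNIV. x i * (\<Sum>j\<in>UNIV. \<Sum>k\<in>UNIV. y j * z k * D (bvec m) j k) * D (bvec r) i m)
      = (\<Sum>m\<in>UNIV. \<Sum>j\<in>UNIV. \<Sum>k\<in>UNIV. x i * y j * z k * (D (bvec r) i m * D (bvec m) j k))"
    by (simp add: sum_distrib_left sum_distrib_right mult_ac)
  also have "\<dots> = (\<Sum>j\<in>UNIV. \<Sum>k\<in>UNIV. \<Sum>m\<in>UNIV. x i * y j * z k * (D (bvec r) i m * D (bvec m) j k))"
    by (rule sum_rotate3[symmetric])
  also have "\<dots> = (\<Sum>j\<in>UNIV. \<Sum>k\<in>UNIV. x i * y j * z k * (\<Sum>m\<in>UNIV. D (bvec r) i m * D (bvec m) j k))"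
    by (simp add: sum_distrib_left)
  finally show "(\<Sum>m\<in>UNIV. x i * (\<lambda>k. \<Sum>j\<in>UNIV. \<Sum>l\<in>UNIV. y j * z l * D (bvec k) j l) m * D (bvec r) i m)
      = (\<Sum>j\<in>UNIV. \<Sum>k\<in>UNIV. x i * y j * z k * (\<Sum>m\<in>UNIV. D (bvec r) i m * D (bvec m) j k))"
    by simp
qed

lemma lie_bracket_dual_bracketI:
  fixes D :: "('n::finite \<Rightarrow> 'k::field_char_0) \<Rightarrow> ('n \<Rightarrow> 'n \<Rightarrow> 'k)"
  assumes skew: "\<And>r i j. D (bvec r) i j = - D (bvec r) j i"
    and jacobi: "\<And>r i j k. (\<Sum>m\<in>UNIV. D (bvec r) i m * D (bvec m) j k
        + D (bvec r) j m * D (bvec m) k i + D (bvec r) k m * D (bvec m) i j) = 0"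
  shows "lie_bracket (dual_bracket D)"
proof (rule lie_bracket_bilinearI)
  fix x y z :: "'n \<Rightarrow> 'k"
  show "dual_bracket D x y = (\<lambda>k. \<Sum>i\<in>UNIV. \<Sum>j\<in>UNIV. x i * y j * D (bvec k) i j)"
    by (simp add: dual_bracket_def)
  show "dual_bracket D x x = (\<lambda>k. 0)"
  proof
    fix r
    let ?S = "\<Sum>i\<in>UNIV. \<Sum>j\<in>UNIV. x i * x j * D (bvec r) i j"
    have "?S = (\<Sum>j\<in>UNIV. \<Sum>i\<in>UNIV. x i * x j * D (bvec r) i j)"
      by (rule sum.swap)
    also have "\<dots> = (\<Sum>j\<in>UNIV. \<Sum>i\<in>UNIV. - (x j * x i * D (bvec r) j i))"
      by (intro sum.cong refl) (subst skew, simp add: mult_ac)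
    also have "\<dots> = - ?S"
      by (simp add: sum_negf)
    finally have "?S = 0" by simp
    then show "dual_bracket D x x r = 0"
      by (simp add: dual_bracket_def)
  qed
  show "(\<lambda>r. dual_bracket D x (dual_bracket D y z) r + dual_bracket D y (dual_bracket D z x) r
      + dual_bracket D z (dual_bracket D x y) r) = (\<lambda>r. 0)"
  proof
    fix r
    define T where "T a b c = (\<Sum>m\<in>UNIV. D (bvec r) a m * D (bvec m) b c)" for a b c
    have t1: "dual_bracket D x (dual_bracket D y z) r
        = (\<Sum>i\<in>UNIV. \<Sum>j\<in>UNIV. \<Sum>k\<in>UNIV. x i * y j * z k * T i j k)"
      unfolding dual_bracket_dual_bracket T_def ..
    have t2: "dual_bracket D y (dual_bracket D z x) r
        = (\<Sum>i\<in>UNIV. \<Sum>j\<in>UNIV. \<Sum>k\<in>UNIV. y j * z k * x i * T j k i)"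
      unfolding dual_bracket_dual_bracket T_def by (rule sum_rotate3)
    have t3: "dual_bracket D z (dual_bracket D x y) r
        = (\<Sum>i\<in>UNIV. \<Sum>j\<in>UNIV. \<Sum>k\<in>UNIV. z k * x i * y j * T k i j)"
      unfolding dual_bracket_dual_bracket T_def by (subst sum_rotate3, rule sum_rotate3)
    have "dual_bracket D x (dual_bracket D y z) r + dual_bracket D y (dual_bracket D z x) r
        + dual_bracket D z (dual_bracket D x y) r
        = (\<Sum>i\<in>UNIV. \<Sum>j\<in>UNIV. \<Sum>k\<in>UNIV. x i * y j * z k * (T i j k + T j k i + T k i j))"
      unfolding t1 t2 t3 by (simp add: sum.distrib[symmetric] algebra_simps)
    also have "\<dots> = 0"
      using jacobi by (simp add: T_def sum.distrib[symmetric])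
    finally show "dual_bracket D x (dual_bracket D y z) r + dual_bracket D y (dual_bracket D z x) r
        + dual_bracket D z (dual_bracket D x y) r = 0" .
  qed
qed

lemma lie_bialgebra_cocomm:
  fixes c :: "'n::finite \<Rightarrow> 'n \<Rightarrow> 'n \<Rightarrow> 'k::field_char_0"
  assumes U: "unital_assoc_algebra c u" and Q: "quadratic_poisson P" and C: "poisson_compatible c P"
  shows "lie_bialgebra (commutator c) (cocomm P u)"
  unfolding lie_bialgebra_def
proof (intro conjI allI)
  show "lie_bracket (commutator c)"
    using lie_bracket_commutator amul_assoc[OF U] by blast
  show "lie_bracket (dual_bracket (cocomm P u))"
    using jacobi_linearization[OF Q qpi_unit_eq_0[OF U C]]
    by (intro lie_bracket_dual_bracketI cocomm_skew[OF Q]) (simp add: cocomm_bvec)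
  show "cocomm P u (\<lambda>i. x i + y i) = (\<lambda>i j. cocomm P u x i j + cocomm P u y i j)" for x y
    by (simp add: cocomm_def pdelta_def fun_eq_iff algebra_simps sum.distrib)
  show "cocomm P u (\<lambda>i. s * x i) = (\<lambda>i j. s * cocomm P u x i j)" for s x
    by (simp add: cocomm_def pdelta_def fun_eq_iff sum_distrib_left algebra_simps)
  show "cocomm P u x i j = - cocomm P u x j i" for x i j
    by (rule cocomm_skew[OF Q])
  show "cocomm P u (commutator c x y)
      = (\<lambda>i j. ad2 (commutator c) x (cocomm P u y) i j - ad2 (commutator c) y (cocomm P u x) i j)"
    for x y
    using cocomm_commutator[OF U C, of x y] by (simp add: fun_eq_iff)
qed

theorem lemma3:
  shows "(\<forall>(c :: 'n::finite \<Rightarrow> 'n \<Rightarrow> 'n \<Rightarrow> real) u P.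
            unital_assoc_algebra c u \<and> quadratic_poisson P \<and> poisson_compatible c P
            \<longrightarrow> lie_bialgebra (commutator c) (cocomm P u))
       \<and> (\<forall>(c :: 'n \<Rightarrow> 'n \<Rightarrow> 'n \<Rightarrow> complex) u P.
            unital_assoc_algebra c u \<and> quadratic_poisson P \<and> poisson_compatible c P
            \<longrightarrow> lie_bialgebra (commutator c) (cocomm P u))"
  by (simp add: lie_bialgebra_cocomm)

end
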